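(* Let $\mathcal H$ be a hypothesis class, and let $S$ be a sample of size $n>1$ that is not realizable by $\mathcal H$ but every proper subsample of $S$ is realizable by $\mathcal H$. Then there exist two functions $F_a,F_b$ mapping $n$-bit strings $x,y\in\{0,1\}^n$ to subsamples of $S$ such that $x\cap y=\emptyset$ (identifying bit strings with subsets of $[n]$) if and only if the joint sample $(F_a(x),F_b(y))$ is not realizable by $\mathcal H$.
   Context: A sample is a finite sequence of examples $(x,y)\in\mathcal X\times\{\pm1\}$; a subsample of $S$ is a sample all of whose examples appear in $S$; $(S_1,S_2)$ denotes concatenation. A sample is realizable by $\mathcal H$ if some $h\in\mathcal H$ agrees with all its examples. *)

theory Defs
  imports Main "HOL-Library.Sublist"
begin

text \<open>Examples are pairs (x, y) with label y :: bool (True = +1, False = -1).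
  A sample is a finite sequence (list) of examples; hypotheses are maps X -> labels.\<close>

definition realizable :: "('x \<Rightarrow> bool) set \<Rightarrow> ('x \<times> bool) list \<Rightarrow> bool" where
  "realizable H S \<longleftrightarrow> (\<exists>h\<in>H. \<forall>(x, y)\<in>set S. h x = y)"

definition subsample :: "('x \<times> bool) list \<Rightarrow> ('x \<times> bool) list \<Rightarrow> bool" where
  "subsample T S \<longleftrightarrow> set T \<subseteq> set S"

definition proper_subsample :: "('x \<times> bool) list \<Rightarrow> ('x \<times> bool) list \<Rightarrow> bool" where
  "proper_subsample T S \<longleftrightarrow> subseq T S \<and> T \<noteq> S"

text \<open>Bit strings of length n as bool lists; disjointness of the associated subsets of [n].\<close>
definition bits_disjoint :: "bool list \<Rightarrow> bool list \<Rightarrow> bool" where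
  "bits_disjoint u v \<longleftrightarrow> (\<forall>i < min (length u) (length v). \<not> (u ! i \<and> v ! i))"

end

theory Submission
  imports Defs
begin

text \<open>Let \<open>F u\<close> keep exactly the examples of \<open>S\<close> at the positions not marked by \<open>u\<close>.
  Then \<open>(F u, F v)\<close> misses exactly the examples at positions in \<open>u \<inter> v\<close>. If \<open>u\<close> and
  \<open>v\<close> are disjoint it therefore contains all of \<open>S\<close> and is not realizable; otherwise it
  is contained in \<open>S\<close> with one example deleted, which is realizable by minimality.\<close>

lemma realizable_subset: "set A \<subseteq> set B \<Longrightarrow> realizable H B \<Longrightarrow> realizable H A"
  unfolding realizable_def by blast

definition unmarked :: "'a list \<Rightarrow> bool list \<Rightarrow> 'a list" where
  "unmarked S u = nths S {i. \<not> u ! i}"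

lemma subsample_unmarked: "subsample (unmarked S u) S"
  unfolding subsample_def unmarked_def by (rule set_nths_subset)

lemma set_append_unmarked:
  "set (unmarked S u @ unmarked S v) = {S ! i |i. i < length S \<and> (\<not> u ! i \<or> \<not> v ! i)}"
  unfolding unmarked_def by (auto simp: set_nths)

lemma set_append_unmarked_eq:
  assumes "bits_disjoint u v" and "length u = length S" and "length v = length S"
  shows "set (unmarked S u @ unmarked S v) = set S"
  using assms unfolding set_append_unmarked bits_disjoint_def by (fastforce simp: in_set_conv_nth)

lemma set_append_unmarked_subset_delete:
  assumes "u ! i" and "v ! i"
  shows "set (unmarked S u @ unmarked S v) \<subseteq> set (nths S (- {i}))"
  using assms unfolding set_append_unmarked by (auto simp: set_nths)

lemma proper_subsample_delete:
  assumes "i < length S"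
  shows "proper_subsample (nths S (- {i})) S"
proof -
  have "{j. j < length S \<and> j \<in> - {i}} = {0..<length S} - {i}" by auto
  then have "length (nths S (- {i})) = length S - 1"
    using assms by (simp add: length_nths)
  then show ?thesis
    using assms subseq_conv_nths unfolding proper_subsample_def by fastforce
qed

theorem lemma5:
  fixes H :: "('x \<Rightarrow> bool) set" and S :: "('x \<times> bool) list" and n :: nat
  assumes "length S = n" and "n > 1"
    and "\<not> realizable H S"
    and "\<And>T. proper_subsample T S \<Longrightarrow> realizable H T"
  shows "\<exists>Fa Fb :: bool list \<Rightarrow> ('x \<times> bool) list.
           (\<forall>u. length u = n \<longrightarrow> subsample (Fa u) S \<and> subsample (Fb u) S) \<and>
           (\<forall>u v. length u = n \<longrightarrow> length v = n \<longrightarrow>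
              (bits_disjoint u v \<longleftrightarrow> \<not> realizable H (Fa u @ Fb v)))"
proof (intro exI conjI allI impI)
  fix u v :: "bool list" assume lu: "length u = n" and lv: "length v = n"
  show "bits_disjoint u v \<longleftrightarrow> \<not> realizable H (unmarked S u @ unmarked S v)"
  proof
    assume "bits_disjoint u v"
    then show "\<not> realizable H (unmarked S u @ unmarked S v)"
      using set_append_unmarked_eq assms(1,3) lu lv by (metis realizable_subset order_refl)
  next
    assume "\<not> realizable H (unmarked S u @ unmarked S v)"
    moreover have "realizable H (unmarked S u @ unmarked S v)" if overlap: "\<not> bits_disjoint u v"
    proof -
      obtain i where "i < n" "u ! i" "v ! i"
        using overlap lu lv unfolding bits_disjoint_def by auto
      then show ?thesis
        using assms(1,4) proper_subsample_delete set_append_unmarked_subset_delete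
          realizable_subset by metis
    qed
    ultimately show "bits_disjoint u v" by blast
  qed
qed (rule subsample_unmarked)+

end
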